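(* Let $A$ be a commutative noetherian local ring, let $x,y\in A$ be an exact pair of zero divisors, and let $a\in A$. (a) If $a$ is weakly regular on $A/(y)$, then $G_a$ is isomorphic to the ideal $(y,a)$ of $A$. (b) If $a$ is weakly regular on $A/(x)$, then $H_a$ is isomorphic to the ideal $(x,a)$ of $A$.
   Context: Two non-units $x,y\in A$ form an exact pair of zero divisors if $\operatorname{Ann}_A(x)=(y)$ and $\operatorname{Ann}_A(y)=(x)$. An element $a\in A$ is weakly regular on a module $M$ if multiplication by $a$ on $M$ is injective. For $a\in A$, let $\gamma_a=\begin{pmatrix} x & a\\ 0 & y\end{pmatrix}$ and $\eta_a=\begin{pmatrix} y & -a\\ 0 & x\end{pmatrix}$, viewed as $A$-linear maps $A^2\to A^2$ acting on column vectors, and set $G_a=\operatorname{Coker}\gamma_a$, $H_a=\operatorname{Coker}\eta_a$. *)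

theory Defs
  imports Main
begin

text \<open>Ideals of a commutative ring (type class idiom; A is the whole type).\<close>
definition is_ideal :: "'a::comm_ring_1 set \<Rightarrow> bool" where
  "is_ideal I \<longleftrightarrow> 0 \<in> I \<and> (\<forall>u\<in>I. \<forall>v\<in>I. u + v \<in> I) \<and> (\<forall>r. \<forall>u\<in>I. r * u \<in> I)"

definition ideal_gen :: "'a::comm_ring_1 set \<Rightarrow> 'a set" where
  "ideal_gen S = {t. \<exists>F c. finite F \<and> F \<subseteq> S \<and> t = (\<Sum>f\<in>F. c f * f)}"

definition finitely_generated_ideal :: "'a::comm_ring_1 set \<Rightarrow> bool" where
  "finitely_generated_ideal I \<longleftrightarrow> (\<exists>F. finite F \<and> I = ideal_gen F)"

definition noetherian_ring :: "'a::comm_ring_1 itself \<Rightarrow> bool" where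
  "noetherian_ring _ \<longleftrightarrow> (\<forall>I::'a set. is_ideal I \<longrightarrow> finitely_generated_ideal I)"

definition maximal_ideal :: "'a::comm_ring_1 set \<Rightarrow> bool" where
  "maximal_ideal M \<longleftrightarrow> is_ideal M \<and> M \<noteq> UNIV \<and>
     (\<forall>J. is_ideal J \<and> M \<subseteq> J \<longrightarrow> J = M \<or> J = UNIV)"

definition local_ring :: "'a::comm_ring_1 itself \<Rightarrow> bool" where
  "local_ring _ \<longleftrightarrow> (\<exists>!M::'a set. maximal_ideal M)"

definition is_unit :: "'a::comm_ring_1 \<Rightarrow> bool" where
  "is_unit u \<longleftrightarrow> u dvd 1"

definition Ann :: "'a::comm_ring_1 \<Rightarrow> 'a set" where
  "Ann u = {r. r * u = 0}"

definition pideal :: "'a::comm_ring_1 \<Rightarrow> 'a set" where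
  "pideal u = ideal_gen {u}"

definition exact_pair :: "'a::comm_ring_1 \<Rightarrow> 'a \<Rightarrow> bool" where
  "exact_pair x y \<longleftrightarrow> \<not> is_unit x \<and> \<not> is_unit y \<and> Ann x = pideal y \<and> Ann y = pideal x"

definition weakly_regular_quot :: "'a::comm_ring_1 \<Rightarrow> 'a set \<Rightarrow> bool" where
  "weakly_regular_quot a I \<longleftrightarrow> (\<forall>r. a * r \<in> I \<longrightarrow> r \<in> I)"

definition gamma_map :: "'a::comm_ring_1 \<Rightarrow> 'a \<Rightarrow> 'a \<Rightarrow> 'a \<times> 'a \<Rightarrow> 'a \<times> 'a" where
  "gamma_map x y a = (\<lambda>(u, v). (x * u + a * v, y * v))"

definition eta_map :: "'a::comm_ring_1 \<Rightarrow> 'a \<Rightarrow> 'a \<Rightarrow> 'a \<times> 'a \<Rightarrow> 'a \<times> 'a" where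
  "eta_map x y a = (\<lambda>(u, v). (y * u - a * v, x * v))"

definition coker_class :: "('a::comm_ring_1 \<times> 'a \<Rightarrow> 'a \<times> 'a) \<Rightarrow> 'a \<times> 'a \<Rightarrow> ('a \<times> 'a) set" where
  "coker_class f w = {w'. (fst w' - fst w, snd w' - snd w) \<in> range f}"

definition coker :: "('a::comm_ring_1 \<times> 'a \<Rightarrow> 'a \<times> 'a) \<Rightarrow> ('a \<times> 'a) set set" where
  "coker f = range (coker_class f)"

definition coker_iso_ideal :: "('a::comm_ring_1 \<times> 'a \<Rightarrow> 'a \<times> 'a) \<Rightarrow> 'a set \<Rightarrow> bool" where
  "coker_iso_ideal f I \<longleftrightarrow> (\<exists>\<phi>. bij_betw \<phi> (coker f) I \<and>
      (\<forall>w w'. \<phi> (coker_class f (fst w + fst w', snd w + snd w')) = \<phi> (coker_class f w) + \<phi> (coker_class f w')) \<and>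
      (\<forall>r w. \<phi> (coker_class f (r * fst w, r * snd w)) = r * \<phi> (coker_class f w)))"

end

theory Submission
  imports Defs
begin

text \<open>The cokernel of \<open>\<gamma>\<^sub>a\<close> maps onto \<open>(y, a)\<close> via \<open>(p, q) \<mapsto> y p - a q\<close>; the map is
  well defined on the cokernel because \<open>x y = 0\<close>, and its kernel is exactly the image of
  \<open>\<gamma>\<^sub>a\<close>: if \<open>y p = a q\<close> then weak regularity of \<open>a\<close> on \<open>A/(y)\<close> gives \<open>q = v y\<close>, and then
  \<open>(p - a v) y = 0\<close> puts \<open>p - a v\<close> into \<open>Ann y = (x)\<close>. Since \<open>\<eta>\<^sub>a\<close> is \<open>\<gamma>\<^sub>-\<^sub>a\<close> with \<open>x\<close> and \<open>y\<close>
  exchanged, part (b) is part (a) for \<open>y, x, -a\<close>.\<close>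

lemma ideal_gen_singleton: "ideal_gen {u::'a::comm_ring_1} = {c * u | c. True}"
proof (intro set_eqI iffI)
  fix t assume "t \<in> ideal_gen {u}"
  then obtain F c where F: "F \<subseteq> {u}" "t = (\<Sum>f\<in>F. c f * f)"
    unfolding ideal_gen_def by blast
  from F(1) have "F = {} \<or> F = {u}" by blast
  then show "t \<in> {c * u | c. True}"
    using F(2) by (auto intro: exI[of _ 0])
next
  fix t assume "t \<in> {c * u | c. True}"
  then show "t \<in> ideal_gen {u}" unfolding ideal_gen_def
    by (auto intro!: exI[of _ "{u}"])
qed

lemma ideal_gen_pair: "ideal_gen {u::'a::comm_ring_1, v} = {c * u + d * v | c d. True}"
proof (intro set_eqI iffI)
  fix t assume "t \<in> ideal_gen {u, v}"
  then obtain F c where F: "F \<subseteq> {u, v}" "t = (\<Sum>f\<in>F. c f * f)"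
    unfolding ideal_gen_def by blast
  from F(1) have "F = {} \<or> F = {u} \<or> F = {v} \<or> F = {u, v}" by blast
  then consider "t = 0 * u + 0 * v" | "t = c u * u + 0 * v" | "t = 0 * u + c v * v"
    | "t = c u * u + c v * v" | "u = v" "t = c u * u + 0 * v"
    using F(2) by (cases "u = v") auto
  then show "t \<in> {c * u + d * v | c d. True}" by cases blast+
next
  fix t assume "t \<in> {c * u + d * v | c d. True}"
  then obtain c d where t: "t = c * u + d * v" by blast
  show "t \<in> ideal_gen {u, v}"
  proof (cases "u = v")
    case True
    then show ?thesis unfolding ideal_gen_def using t
      by (intro CollectI exI[of _ "{u}"] exI[of _ "\<lambda>_. c + d"]) (auto simp: algebra_simps)
  next
    case False
    then show ?thesis unfolding ideal_gen_def using t
      by (intro CollectI exI[of _ "{u, v}"] exI[of _ "\<lambda>f. if f = u then c else d"]) auto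
  qed
qed

lemma ideal_gen_pair_uminus: "ideal_gen {u::'a::comm_ring_1, - v} = ideal_gen {u, v}"
proof -
  have "c * u + d * - v = c * u + (- d) * v" for c d :: 'a by simp
  then show ?thesis unfolding ideal_gen_pair by (metis minus_minus)
qed

lemma weakly_regular_quot_pideal_uminus:
  "weakly_regular_quot (- a) (pideal u) \<longleftrightarrow> weakly_regular_quot (a::'a::comm_ring_1) (pideal u)"
proof -
  have "(\<exists>c. - a * r = c * u) \<longleftrightarrow> (\<exists>c. a * r = c * u)" for r
    by (metis minus_minus mult_minus_left)
  then show ?thesis
    unfolding weakly_regular_quot_def pideal_def ideal_gen_singleton by simp
qed

lemma eta_map_eq_gamma_map: "eta_map x y a = gamma_map y x (- a)"
  by (simp add: eta_map_def gamma_map_def)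

lemma Ann_eq_pideal_iff:
  "Ann y = pideal x \<longleftrightarrow> (\<forall>r::'a::comm_ring_1. r * y = 0 \<longleftrightarrow> (\<exists>c. r = c * x))"
  unfolding Ann_def pideal_def ideal_gen_singleton by auto

lemma coker_iso_ideal_gen_pair:
  fixes f :: "'a::comm_ring_1 \<times> 'a \<Rightarrow> 'a \<times> 'a"
  assumes range_f: "range f = {(p, q). \<alpha> * p + \<beta> * q = 0}"
  shows "coker_iso_ideal f (ideal_gen {\<alpha>, \<beta>})"
proof -
  define \<psi> where "\<psi> = (\<lambda>w. fst w * \<alpha> + snd w * \<beta>)"
  have class_eq: "coker_class f w = {w'. \<psi> w' = \<psi> w}" for w
    unfolding coker_class_def range_f \<psi>_def by (auto simp: algebra_simps)
  define \<phi> where "\<phi> = (\<lambda>C. \<psi> (SOME w. w \<in> C))"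
  have \<phi>_class: "\<phi> (coker_class f w) = \<psi> w" for w
  proof -
    have "(SOME w'. w' \<in> coker_class f w) \<in> coker_class f w"
      by (rule someI[of _ w]) (simp add: class_eq)
    then show ?thesis unfolding \<phi>_def by (simp add: class_eq)
  qed
  have "inj_on \<phi> (coker f)"
    unfolding coker_def by (rule inj_onI) (clarsimp simp: \<phi>_class; simp add: class_eq)
  moreover have "\<phi> ` coker f = range \<psi>"
    unfolding coker_def image_image \<phi>_class ..
  moreover have "range \<psi> = ideal_gen {\<alpha>, \<beta>}"
    unfolding ideal_gen_pair \<psi>_def by (fastforce intro: range_eqI[where x = "(c, d)" for c d])
  ultimately show ?thesis
    unfolding coker_iso_ideal_def bij_betw_def
    by (auto simp: \<phi>_class \<psi>_def algebra_simps)
qed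

lemma range_gamma_map:
  fixes x y a :: "'a::comm_ring_1"
  assumes Ann_y: "Ann y = pideal x"
    and regular: "weakly_regular_quot a (pideal y)"
  shows "range (gamma_map x y a) = {(p, q). y * p + (- a) * q = 0}"
proof (intro set_eqI iffI)
  have ann: "r * y = 0 \<longleftrightarrow> (\<exists>c. r = c * x)" for r
    using Ann_y by (simp add: Ann_eq_pideal_iff)
  then have xy: "x * y = 0" by (metis mult_1)
  fix w
  show "w \<in> range (gamma_map x y a) \<Longrightarrow> w \<in> {(p, q). y * p + (- a) * q = 0}"
    using xy by (auto simp: gamma_map_def algebra_simps)
  assume "w \<in> {(p, q). y * p + (- a) * q = 0}"
  then obtain p q where w: "w = (p, q)" and pq: "a * q = p * y"
    by (auto simp: algebra_simps)
  obtain v where v: "q = v * y"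
    using regular pq unfolding weakly_regular_quot_def pideal_def ideal_gen_singleton by auto
  have "(p - a * v) * y = 0" using pq v by (simp add: algebra_simps)
  then obtain u where u: "p - a * v = u * x" using ann by blast
  have "w = gamma_map x y a (u, v)"
    using w u v by (simp add: gamma_map_def algebra_simps eq_diff_eq)
  then show "w \<in> range (gamma_map x y a)" by blast
qed

lemma coker_gamma_map_iso_ideal:
  fixes x y a :: "'a::comm_ring_1"
  assumes "Ann y = pideal x" and "weakly_regular_quot a (pideal y)"
  shows "coker_iso_ideal (gamma_map x y a) (ideal_gen {y, a})"
  using coker_iso_ideal_gen_pair[OF range_gamma_map[OF assms]]
  by (simp add: ideal_gen_pair_uminus)

theorem proposition3p8:
  fixes x y a :: "'a::comm_ring_1"
  assumes "noetherian_ring TYPE('a)"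
    and "local_ring TYPE('a)"
    and "exact_pair x y"
  shows "(weakly_regular_quot a (pideal y) \<longrightarrow> coker_iso_ideal (gamma_map x y a) (ideal_gen {y, a}))
       \<and> (weakly_regular_quot a (pideal x) \<longrightarrow> coker_iso_ideal (eta_map x y a) (ideal_gen {x, a}))"
proof (intro conjI impI)
  have Ann_x: "Ann x = pideal y" and Ann_y: "Ann y = pideal x"
    using \<open>exact_pair x y\<close> by (simp_all add: exact_pair_def)
  show "coker_iso_ideal (gamma_map x y a) (ideal_gen {y, a})"
    if "weakly_regular_quot a (pideal y)"
    using coker_gamma_map_iso_ideal[OF Ann_y that] .
  show "coker_iso_ideal (eta_map x y a) (ideal_gen {x, a})"
    if "weakly_regular_quot a (pideal x)"
  proof -
    have "weakly_regular_quot (- a) (pideal x)"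
      using that by (simp add: weakly_regular_quot_pideal_uminus)
    from coker_gamma_map_iso_ideal[OF Ann_x this]
    show ?thesis by (simp add: eta_map_eq_gamma_map ideal_gen_pair_uminus)
  qed
qed

end
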